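(* Let $d\geq 2$ be a fixed integer. For all positive integers $n$ and $k \leq n^{(d-1)/d}\cdot (5d)^{1/d-2}$, there is a set of $n$ points in $\mathbb{R}^d$ such that every geometric spanner of tree-width $k$ on this set has dilation $\Omega (n/k^{d/(d-1)})$.
   Context: A geometric spanner on a point set $P\subset\mathbb{R}^d$ is a graph $G$ with vertex set $P$ in which each edge is weighted by the Euclidean distance between its endpoints. Its dilation is $\max\{ d_G(p,p')/|pp'| : p\neq p'\in P\}$, where $d_G$ is the shortest-path distance in $G$ and $|pp'|$ the Euclidean distance. Asymptotic notation is with $d$ fixed. *)

theory Defs
  imports "HOL-Analysis.Analysis"
begin

fun is_walk :: "'a set set \<Rightarrow> 'a list \<Rightarrow> bool" where
  "is_walk E [] = False"
| "is_walk E [x] = True"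
| "is_walk E (x # y # xs) = ({x, y} \<in> E \<and> is_walk E (y # xs))"

definition connected_in :: "'a set set \<Rightarrow> 'a set \<Rightarrow> bool" where
  "connected_in E V \<longleftrightarrow> (\<forall>x\<in>V. \<forall>y\<in>V. \<exists>xs. is_walk E xs \<and> set xs \<subseteq> V \<and> hd xs = x \<and> last xs = y)"

definition simple_edges :: "'a set \<Rightarrow> 'a set set" where
  "simple_edges V = {{p, q} | p q. p \<in> V \<and> q \<in> V \<and> p \<noteq> q}"

definition is_tree :: "nat set \<Rightarrow> nat set set \<Rightarrow> bool" where
  "is_tree I F \<longleftrightarrow> finite I \<and> I \<noteq> {} \<and> F \<subseteq> simple_edges I \<and> connected_in F I
      \<and> card F = card I - 1"

definition tree_decomposition ::
  "'a set \<Rightarrow> 'a set set \<Rightarrow> nat set \<Rightarrow> nat set set \<Rightarrow> (nat \<Rightarrow> 'a set) \<Rightarrow> bool" where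
  "tree_decomposition V E I F B \<longleftrightarrow> is_tree I F
      \<and> (\<forall>i\<in>I. B i \<subseteq> V)
      \<and> (\<forall>v\<in>V. \<exists>i\<in>I. v \<in> B i)
      \<and> (\<forall>e\<in>E. \<exists>i\<in>I. e \<subseteq> B i)
      \<and> (\<forall>v\<in>V. connected_in F {i\<in>I. v \<in> B i})"

definition has_td_width :: "'a set \<Rightarrow> 'a set set \<Rightarrow> nat \<Rightarrow> bool" where
  "has_td_width V E k \<longleftrightarrow> (\<exists>I F B. tree_decomposition V E I F B \<and> (\<forall>i\<in>I. card (B i) \<le> k + 1))"

definition treewidth :: "'a set \<Rightarrow> 'a set set \<Rightarrow> nat" where
  "treewidth V E = (LEAST k. has_td_width V E k)"

fun walk_len :: "'a::metric_space list \<Rightarrow> real" where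
  "walk_len [] = 0"
| "walk_len [x] = 0"
| "walk_len (x # y # xs) = dist x y + walk_len (y # xs)"

definition graph_dist :: "'a::metric_space set set \<Rightarrow> 'a \<Rightarrow> 'a \<Rightarrow> ereal" where
  "graph_dist E p q = (INF xs\<in>{xs. is_walk E xs \<and> hd xs = p \<and> last xs = q}. ereal (walk_len xs))"

definition geometric_graph :: "'a set \<Rightarrow> 'a set set \<Rightarrow> bool" where
  "geometric_graph P E \<longleftrightarrow> E \<subseteq> simple_edges P"

definition dilation :: "'a::metric_space set \<Rightarrow> 'a set set \<Rightarrow> ereal" where
  "dilation P E = (SUP pq\<in>{(p, q). p \<in> P \<and> q \<in> P \<and> p \<noteq> q}.
                     graph_dist E (fst pq) (snd pq) / ereal (dist (fst pq) (snd pq)))"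

end

(*
  Put d L^d m points into the grid [0, L)^d: every unit cell carries a star of d axis-parallel
  spokes of m points with spacing 1/m, and further points are added arbitrarily. Suppose a
  geometric graph of tree-width k had dilation below m. Then points at distance at most 1/m are
  joined by walks of length below 1. Some bag S of a tree decomposition, with at most k + 1
  points, is a balanced separator. S spoils at most |S| (2d + 4)^d cells; a good cell reaches
  all good cells connected to it by an axis-parallel staircase of good cells, each through its
  stars, without touching S. Double counting the staircases blocked by spoiled cells yields a
  component of the graph minus S with more than half of the points once L^(d-1) >> k, a
  contradiction. Taking L ~ k^(1/(d-1)) and m ~ n / L^d gives dilation Omega(n / k^(d/(d-1))).
*)

theory Submission
  imports Defs
begin

section \<open>Graphs and trees\<close>

definition edge_rel :: "'a set set \<Rightarrow> 'a set \<Rightarrow> ('a \<times> 'a) set" where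
  "edge_rel E V = {(a, b). {a, b} \<in> E \<and> a \<in> V \<and> b \<in> V}"

lemma sym_edge_rel: "sym (edge_rel E V)"
  by (auto simp: edge_rel_def sym_def insert_commute)

lemma edge_rel_rtrancl_sym: "(a, b) \<in> (edge_rel E V)\<^sup>* \<Longrightarrow> (b, a) \<in> (edge_rel E V)\<^sup>*"
  using sym_rtrancl[OF sym_edge_rel] by (metis symD)

lemma edge_rel_mono: "E \<subseteq> E' \<Longrightarrow> V \<subseteq> V' \<Longrightarrow> edge_rel E V \<subseteq> edge_rel E' V'"
  by (auto simp: edge_rel_def)

lemma is_walk_imp_edge_rel_rtrancl:
  "is_walk E xs \<Longrightarrow> set xs \<subseteq> V \<Longrightarrow> (hd xs, last xs) \<in> (edge_rel E V)\<^sup>*"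
proof (induction E xs rule: is_walk.induct)
  case (3 E x y xs)
  then have "(x, y) \<in> edge_rel E V" by (auto simp: edge_rel_def)
  moreover have "(y, last (y # xs)) \<in> (edge_rel E V)\<^sup>*" using 3 by auto
  ultimately show ?case by (auto intro: converse_rtrancl_into_rtrancl)
qed auto

lemma edge_rel_rtrancl_imp_walk:
  assumes "(x, y) \<in> (edge_rel E V)\<^sup>*" "x \<in> V"
  shows "\<exists>xs. is_walk E xs \<and> set xs \<subseteq> V \<and> hd xs = x \<and> last xs = y"
  using assms
proof (induction rule: converse_rtrancl_induct)
  case base
  then show ?case by (intro exI[of _ "[y]"]) auto
next
  case (step x z)
  then obtain xs where xs: "is_walk E xs" "set xs \<subseteq> V" "hd xs = z" "last xs = y"
    by (auto simp: edge_rel_def)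
  then obtain rest where "xs = z # rest" by (cases xs) auto
  with xs step show ?case by (intro exI[of _ "x # xs"]) (auto simp: edge_rel_def)
qed

lemma connected_in_iff_rtrancl:
  "connected_in E V \<longleftrightarrow> (\<forall>x\<in>V. \<forall>y\<in>V. (x, y) \<in> (edge_rel E V)\<^sup>*)"
  unfolding connected_in_def by (metis edge_rel_rtrancl_imp_walk is_walk_imp_edge_rel_rtrancl)

lemma reachable_subset: "x \<in> V \<Longrightarrow> {y. (x, y) \<in> (edge_rel E V)\<^sup>*} \<subseteq> V"
  by (auto elim: rtranclE simp: edge_rel_def)

lemma connected_in_reachable:
  assumes "x \<in> V"
  shows "connected_in E {y. (x, y) \<in> (edge_rel E V)\<^sup>*}" (is "connected_in E ?C")
proof -
  have from_x: "(x, y) \<in> (edge_rel E ?C)\<^sup>*" if "(x, y) \<in> (edge_rel E V)\<^sup>*" for y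
    using that
  proof (induction rule: rtrancl_induct)
    case (step y z)
    then have "(y, z) \<in> edge_rel E ?C"
      by (auto simp: edge_rel_def intro: rtrancl_into_rtrancl)
    with step show ?case by (auto intro: rtrancl_into_rtrancl)
  qed simp
  show ?thesis
    unfolding connected_in_iff_rtrancl
  proof (intro ballI)
    fix y z assume "y \<in> ?C" "z \<in> ?C"
    then show "(y, z) \<in> (edge_rel E ?C)\<^sup>*"
      using from_x edge_rel_rtrancl_sym rtrancl_trans by (metis mem_Collect_eq)
  qed
qed

lemma finite_simple_edges: "finite V \<Longrightarrow> finite (simple_edges V)"
  by (rule finite_subset[of _ "Pow V"]) (auto simp: simple_edges_def)

definition hops :: "('a \<times> 'a) set \<Rightarrow> 'a \<Rightarrow> 'a \<Rightarrow> nat" where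
  "hops R r y = (LEAST n. (r, y) \<in> R ^^ n)"

lemma hops_parent:
  assumes "(r, y) \<in> R\<^sup>*" "y \<noteq> r"
  shows "\<exists>u. (u, y) \<in> R \<and> Suc (hops R r u) = hops R r y"
proof -
  have "(r, y) \<in> R ^^ hops R r y"
    unfolding hops_def using assms(1) by (metis LeastI_ex rtrancl_power)
  moreover have "hops R r y \<noteq> 0" using calculation assms(2) by (cases "hops R r y") auto
  ultimately obtain p u where p: "hops R r y = Suc p" and u: "(r, u) \<in> R ^^ p" "(u, y) \<in> R"
    by (metis not0_implies_Suc relpow_Suc_E)
  have "hops R r u \<le> p" unfolding hops_def using u(1) by (rule Least_le)
  moreover have "hops R r y \<le> Suc (hops R r u)"
  proof -
    have "(r, u) \<in> R ^^ hops R r u"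
      unfolding hops_def using u(1) by (rule LeastI)
    then have "(r, y) \<in> R ^^ Suc (hops R r u)" using u(2) by auto
    then show ?thesis unfolding hops_def by (rule Least_le)
  qed
  ultimately show ?thesis using p u(2) by (intro exI[of _ u]) auto
qed

lemma card_le_Suc_card_edges_if_connected:
  assumes V: "finite V" and F: "F \<subseteq> simple_edges V" and conn: "connected_in F V"
  shows "card V \<le> Suc (card F)"
proof (cases "V = {}")
  case False
  then obtain r where r: "r \<in> V" by blast
  define R where "R = edge_rel F V"
  have "\<exists>u. (u, y) \<in> R \<and> Suc (hops R r u) = hops R r y" if "y \<in> V - {r}" for y
    using hops_parent[of r y R] conn r that by (auto simp: connected_in_iff_rtrancl R_def)
  then obtain par where par: "\<And>y. y \<in> V - {r} \<Longrightarrow> (par y, y) \<in> R \<and> Suc (hops R r (par y)) = hops R r y"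
    by metis
  have "(\<lambda>y. {par y, y}) ` (V - {r}) \<subseteq> F" using par by (auto simp: R_def edge_rel_def)
  moreover have "inj_on (\<lambda>y. {par y, y}) (V - {r})"
  proof (rule inj_onI)
    fix x y assume "x \<in> V - {r}" "y \<in> V - {r}" "{par x, x} = {par y, y}"
    then show "x = y" using par[of x] par[of y] by (auto simp: doubleton_eq_iff)
  qed
  moreover have "finite F" using F V finite_simple_edges finite_subset by blast
  ultimately have "card (V - {r}) \<le> card F" by (metis card_inj_on_le)
  then show ?thesis using r V by simp
qed simp

lemma tree_edge_bridge:
  assumes tree: "is_tree I F" and e: "{i, j} \<in> F"
  shows "(i, j) \<notin> (edge_rel (F - {{i, j}}) I)\<^sup>*"
proof
  define F' where "F' = F - {{i, j}}"
  assume ij: "(i, j) \<in> (edge_rel F' I)\<^sup>*"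
  then have ji: "(j, i) \<in> (edge_rel F' I)\<^sup>*" by (rule edge_rel_rtrancl_sym)
  have "edge_rel F I \<subseteq> (edge_rel F' I)\<^sup>*"
  proof
    fix p assume "p \<in> edge_rel F I"
    then obtain a b where p: "p = (a, b)" "{a, b} \<in> F" "a \<in> I" "b \<in> I"
      by (auto simp: edge_rel_def)
    show "p \<in> (edge_rel F' I)\<^sup>*"
    proof (cases "{a, b} = {i, j}")
      case True
      then show ?thesis
        using p ij ji by (auto simp: doubleton_eq_iff)
    next
      case False
      then show ?thesis using p by (auto simp: F'_def edge_rel_def)
    qed
  qed
  then have "(edge_rel F I)\<^sup>* \<subseteq> (edge_rel F' I)\<^sup>*" by (rule rtrancl_subset_rtrancl)
  then have "connected_in F' I"
    using tree unfolding is_tree_def connected_in_iff_rtrancl by blast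
  moreover have "F' \<subseteq> simple_edges I" "finite I" using tree by (auto simp: is_tree_def F'_def)
  ultimately have "card I \<le> Suc (card F')" by (intro card_le_Suc_card_edges_if_connected)
  moreover have "finite F" using tree finite_simple_edges finite_subset by (auto simp: is_tree_def)
  then have "card F' = card F - 1" "card F > 0" using e by (auto simp: F'_def card_gt_0_iff)
  moreover have "card F = card I - 1" using tree by (simp add: is_tree_def)
  ultimately show False by linarith
qed

definition tree_side :: "nat set set \<Rightarrow> nat set \<Rightarrow> nat \<Rightarrow> nat \<Rightarrow> nat set" where
  "tree_side F I i j = {x \<in> I. (j, x) \<in> (edge_rel (F - {{i, j}}) I)\<^sup>*}"

lemma tree_sides_disjoint:
  assumes "is_tree I F" "{i, j} \<in> F"
  shows "tree_side F I i j \<inter> tree_side F I j i = {}"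
proof (rule ccontr)
  assume "tree_side F I i j \<inter> tree_side F I j i \<noteq> {}"
  then obtain x where "(j, x) \<in> (edge_rel (F - {{i, j}}) I)\<^sup>*" "(i, x) \<in> (edge_rel (F - {{i, j}}) I)\<^sup>*"
    unfolding tree_side_def by (auto simp: insert_commute)
  then have "(i, j) \<in> (edge_rel (F - {{i, j}}) I)\<^sup>*"
    by (meson edge_rel_rtrancl_sym rtrancl_trans)
  then show False using tree_edge_bridge assms by blast
qed

lemma tree_edge_choice_collision:
  assumes tree: "is_tree I F" and f: "\<And>i. i \<in> I \<Longrightarrow> {i, f i} \<in> F"
  shows "\<exists>i\<in>I. f i \<in> I \<and> f i \<noteq> i \<and> f (f i) = i"
proof -
  have I: "finite I" "I \<noteq> {}" "card F = card I - 1" and F: "F \<subseteq> simple_edges I"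
    using tree by (auto simp: is_tree_def)
  have "\<not> inj_on (\<lambda>i. {i, f i}) I"
  proof
    assume "inj_on (\<lambda>i. {i, f i}) I"
    moreover have "(\<lambda>i. {i, f i}) ` I \<subseteq> F" using f by auto
    moreover have "finite F" using I F finite_simple_edges finite_subset by blast
    ultimately have "card I \<le> card F" by (metis card_inj_on_le)
    moreover have "card I > 0" using I by auto
    ultimately show False using I by linarith
  qed
  then obtain i i' where ii': "i \<in> I" "i' \<in> I" "i \<noteq> i'" "{i, f i} = {i', f i'}"
    unfolding inj_on_def by blast
  moreover have "f i \<in> I" "f i \<noteq> i" using f[OF ii'(1)] F by (auto simp: simple_edges_def doubleton_eq_iff)
  ultimately show ?thesis by (auto simp: doubleton_eq_iff)
qed

lemma rtrancl_last_step_avoiding: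
  assumes "(a, i) \<in> R\<^sup>*" "a \<noteq> i"
  shows "\<exists>j. (a, j) \<in> (R \<inter> {(x, y). x \<noteq> i \<and> y \<noteq> i})\<^sup>* \<and> (j, i) \<in> R"
  using assms
proof (induction rule: converse_rtrancl_induct)
  case (step a a')
  show ?case
  proof (cases "a' = i")
    case False
    then obtain j where j: "(a', j) \<in> (R \<inter> {(x, y). x \<noteq> i \<and> y \<noteq> i})\<^sup>*" "(j, i) \<in> R"
      using step by auto
    have "(a, a') \<in> R \<inter> {(x, y). x \<noteq> i \<and> y \<noteq> i}" using step False by auto
    with j show ?thesis by (meson converse_rtrancl_into_rtrancl)
  qed (use step in auto)
qed simp

section \<open>Balanced bags of tree decompositions\<close>

lemma tree_decomposition_bags_connected:
  assumes td: "tree_decomposition V E I F B" and X: "X \<subseteq> V" "X \<inter> B i = {}" "connected_in E X"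
    and a: "a \<in> I" "B a \<inter> X \<noteq> {}" and b: "b \<in> I" "B b \<inter> X \<noteq> {}"
  shows "(a, b) \<in> (edge_rel F (I - {i}))\<^sup>*"
proof -
  define R where "R = edge_rel F (I - {i})"
  have bags_of_v: "(l1, l2) \<in> R\<^sup>*" if "v \<in> X" "l1 \<in> I" "l2 \<in> I" "v \<in> B l1" "v \<in> B l2" for v l1 l2
  proof -
    have "connected_in F {l\<in>I. v \<in> B l}" using td that X unfolding tree_decomposition_def by auto
    then have "(l1, l2) \<in> (edge_rel F {l\<in>I. v \<in> B l})\<^sup>*" using that by (auto simp: connected_in_iff_rtrancl)
    moreover have "edge_rel F {l\<in>I. v \<in> B l} \<subseteq> R"
      unfolding R_def using that X by (intro edge_rel_mono) auto
    ultimately show ?thesis using rtrancl_mono by blast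
  qed
  obtain u where u: "u \<in> B a" "u \<in> X" using a by auto
  obtain w where w: "w \<in> B b" "w \<in> X" using b by auto
  have "(u, w) \<in> (edge_rel E X)\<^sup>*" using X(3) u w by (auto simp: connected_in_iff_rtrancl)
  then have "\<forall>b\<in>I. w \<in> B b \<longrightarrow> (a, b) \<in> R\<^sup>*"
  proof (induction rule: rtrancl_induct)
    case base
    then show ?case using bags_of_v u a by blast
  next
    case (step w w')
    then have e: "{w, w'} \<in> E" "w \<in> X" "w' \<in> X" by (auto simp: edge_rel_def)
    then obtain l where l: "l \<in> I" "{w, w'} \<subseteq> B l" using td unfolding tree_decomposition_def by blast
    then have "(a, l) \<in> R\<^sup>*" using step by auto
    then show ?case using bags_of_v[of w' l] l e by (meson insert_subset rtrancl_trans)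
  qed
  then show ?thesis using w b R_def by blast
qed

lemma tree_decomposition_connected_set_one_side:
  assumes td: "tree_decomposition V E I F B" and i: "i \<in> I"
    and X: "X \<subseteq> V" "X \<inter> B i = {}" "X \<noteq> {}" "connected_in E X"
  shows "\<exists>j. {i, j} \<in> F \<and> {l\<in>I. B l \<inter> X \<noteq> {}} \<subseteq> tree_side F I i j"
proof -
  have tree: "is_tree I F" using td by (auto simp: tree_decomposition_def)
  obtain x where x: "x \<in> X" using X by auto
  then obtain a where a: "a \<in> I" "x \<in> B a" using X td unfolding tree_decomposition_def by blast
  have ai: "a \<noteq> i" using a x X by auto
  have "(a, i) \<in> (edge_rel F I)\<^sup>*" using tree a i by (auto simp: is_tree_def connected_in_iff_rtrancl)
  then obtain j where j: "(a, j) \<in> (edge_rel F I \<inter> {(x, y). x \<noteq> i \<and> y \<noteq> i})\<^sup>*" "(j, i) \<in> edge_rel F I"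
    using rtrancl_last_step_avoiding[OF _ ai] by blast
  have ij: "{i, j} \<in> F" using j(2) unfolding edge_rel_def by (auto simp: insert_commute)
  define F' where "F' = F - {{i, j}}"
  have avoid_ij: "edge_rel F I \<inter> {(x, y). x \<noteq> i \<and> y \<noteq> i} \<subseteq> edge_rel F' I"
  proof clarify
    fix x y assume "(x, y) \<in> edge_rel F I" "x \<noteq> i" "y \<noteq> i"
    moreover have "{x, y} \<noteq> {i, j}" using \<open>x \<noteq> i\<close> \<open>y \<noteq> i\<close> by blast
    ultimately show "(x, y) \<in> edge_rel F' I" unfolding edge_rel_def F'_def by blast
  qed
  have "(a, j) \<in> (edge_rel F' I)\<^sup>*" using rtrancl_mono[OF avoid_ij] j(1) by (rule subsetD)
  then have ja: "(j, a) \<in> (edge_rel F' I)\<^sup>*" by (rule edge_rel_rtrancl_sym)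
  have avoid_i: "edge_rel F (I - {i}) \<subseteq> edge_rel F' I"
  proof clarify
    fix x y assume xy: "(x, y) \<in> edge_rel F (I - {i})"
    then have "x \<noteq> i" "y \<noteq> i" unfolding edge_rel_def by auto
    then have "{x, y} \<noteq> {i, j}" by blast
    with xy show "(x, y) \<in> edge_rel F' I" unfolding edge_rel_def F'_def by blast
  qed
  have "b \<in> tree_side F I i j" if "b \<in> I" "B b \<inter> X \<noteq> {}" for b
  proof -
    have "(a, b) \<in> (edge_rel F (I - {i}))\<^sup>*"
      using tree_decomposition_bags_connected[OF td X(1,2,4) a(1) _ that] a x by auto
    then have "(a, b) \<in> (edge_rel F' I)\<^sup>*" by (rule subsetD[OF rtrancl_mono[OF avoid_i]])
    then have "(j, b) \<in> (edge_rel F' I)\<^sup>*" using ja by (rule rtrancl_trans[rotated])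
    then show ?thesis using that unfolding tree_side_def F'_def by blast
  qed
  then show ?thesis using ij by blast
qed

text \<open>If every bag failed, each node \<open>i\<close> would have a large connected piece avoiding its bag,
  lying beyond one tree edge at \<open>i\<close>. Two neighbours choosing the same edge have intersecting
  pieces that lie on opposite sides of that edge.\<close>

lemma tree_decomposition_balanced_bag:
  assumes td: "tree_decomposition V E I F B" and V: "finite V"
  shows "\<exists>i\<in>I. \<forall>X. X \<subseteq> V - B i \<and> connected_in E X \<longrightarrow> 2 * card X \<le> card V"
proof (rule ccontr)
  assume "\<not> ?thesis"
  then have "\<forall>i\<in>I. \<exists>X. X \<subseteq> V - B i \<and> connected_in E X \<and> card V < 2 * card X"
    by (meson not_le)
  then obtain Xf where Xf: "\<And>i. i \<in> I \<Longrightarrow> Xf i \<subseteq> V - B i \<and> connected_in E (Xf i) \<and> card V < 2 * card (Xf i)"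
    by metis
  have tree: "is_tree I F" using td by (auto simp: tree_decomposition_def)
  have "\<exists>j. {i, j} \<in> F \<and> {l\<in>I. B l \<inter> Xf i \<noteq> {}} \<subseteq> tree_side F I i j" if "i \<in> I" for i
  proof (rule tree_decomposition_connected_set_one_side[OF td that])
    show "Xf i \<subseteq> V" "Xf i \<inter> B i = {}" "connected_in E (Xf i)" using Xf[OF that] by auto
    show "Xf i \<noteq> {}" using Xf[OF that] by auto
  qed
  then obtain f where f: "\<And>i. i \<in> I \<Longrightarrow> {i, f i} \<in> F \<and> {l\<in>I. B l \<inter> Xf i \<noteq> {}} \<subseteq> tree_side F I i (f i)"
    by metis
  have "\<exists>i\<in>I. f i \<in> I \<and> f i \<noteq> i \<and> f (f i) = i"
    by (rule tree_edge_choice_collision[OF tree]) (use f in blast)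
  then obtain i where i: "i \<in> I" "f i \<in> I" "f (f i) = i" by blast
  define i' where "i' = f i"
  have "Xf i \<inter> Xf i' \<noteq> {}"
  proof
    assume disj: "Xf i \<inter> Xf i' = {}"
    have sub: "Xf i \<subseteq> V" "Xf i' \<subseteq> V" using Xf i by (auto simp: i'_def)
    then have "card (Xf i) + card (Xf i') = card (Xf i \<union> Xf i')"
      using V disj by (metis card_Un_disjoint finite_subset)
    also have "\<dots> \<le> card V" using sub V by (intro card_mono) auto
    finally show False using Xf[OF i(1)] Xf[OF i(2)] by (simp add: i'_def)
  qed
  then obtain v where v: "v \<in> Xf i" "v \<in> Xf i'" by blast
  then obtain a where a: "a \<in> I" "v \<in> B a" using Xf i td unfolding tree_decomposition_def by blast
  have "a \<in> tree_side F I i i'" using f[OF i(1)] a v by (auto simp: i'_def)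
  moreover have "a \<in> tree_side F I i' i" using f[OF i(2)] a v i(3) by (auto simp: i'_def)
  moreover have "{i, i'} \<in> F" using f[OF i(1)] by (simp add: i'_def)
  ultimately show False using tree_sides_disjoint[OF tree] by blast
qed

lemma has_td_width_card:
  assumes "E \<subseteq> simple_edges V"
  shows "has_td_width V E (card V)"
proof -
  have "is_tree {0} {}" by (simp add: is_tree_def connected_in_iff_rtrancl)
  moreover have "\<forall>e\<in>E. e \<subseteq> V" using assms by (auto simp: simple_edges_def)
  ultimately have "tree_decomposition V E {0} {} (\<lambda>_. V)"
    by (auto simp: tree_decomposition_def connected_in_iff_rtrancl)
  then show ?thesis unfolding has_td_width_def by fastforce
qed

lemma has_td_width_treewidth:
  assumes "E \<subseteq> simple_edges V"
  shows "has_td_width V E (treewidth V E)"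
  unfolding treewidth_def using has_td_width_card[OF assms] by (rule LeastI)

section \<open>Walks and dilation\<close>

lemma simple_edges_memD:
  assumes "{x, y} \<in> simple_edges P"
  shows "x \<in> P" "y \<in> P"
proof -
  obtain p q where pq: "{x, y} = {p, q}" "p \<in> P" "q \<in> P"
    using assms by (auto simp: simple_edges_def)
  then show "x \<in> P" "y \<in> P" by (metis doubleton_eq_iff)+
qed

lemma is_walk_set_subset: "is_walk E xs \<Longrightarrow> E \<subseteq> simple_edges P \<Longrightarrow> hd xs \<in> P \<Longrightarrow> set xs \<subseteq> P"
proof (induction E xs rule: is_walk.induct)
  case (3 E x y xs)
  then have "y \<in> P" using simple_edges_memD by (metis is_walk.simps(3) subsetD)
  then show ?case using 3 by auto
qed auto

lemma walk_len_nonneg: "0 \<le> walk_len xs"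
  by (induction xs rule: walk_len.induct) auto

lemma dist_hd_le_walk_len: "w \<in> set xs \<Longrightarrow> dist (hd xs) w \<le> walk_len xs"
proof (induction xs rule: walk_len.induct)
  case (3 x y xs)
  show ?case
  proof (cases "w = x")
    case True
    then show ?thesis using walk_len_nonneg[of "x # y # xs"] by simp
  next
    case False
    then have "dist y w \<le> walk_len (y # xs)" using 3 by simp
    then show ?thesis using dist_triangle[of x w y] by simp
  qed
qed auto

lemma dilation_less_imp_short_walk:
  fixes P :: "'a::metric_space set"
  assumes dil: "dilation P E < ereal T" and pq: "p \<in> P" "q \<in> P" "p \<noteq> q"
  shows "\<exists>xs. is_walk E xs \<and> hd xs = p \<and> last xs = q \<and> walk_len xs < T * dist p q"
proof -
  have d: "dist p q > 0" using pq by simp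
  have "graph_dist E p q / ereal (dist p q) \<le> dilation P E"
    unfolding dilation_def using SUP_upper[of "(p, q)" "{(p, q). p \<in> P \<and> q \<in> P \<and> p \<noteq> q}"
      "\<lambda>pq. graph_dist E (fst pq) (snd pq) / ereal (dist (fst pq) (snd pq))"] pq by simp
  then have lt: "graph_dist E p q / ereal (dist p q) < ereal T" using dil by simp
  have "graph_dist E p q < ereal (T * dist p q)"
  proof (cases "graph_dist E p q" rule: ereal_cases)
    case (real r)
    then have "r / dist p q < T" using lt d by simp
    then show ?thesis using real d by (simp add: divide_less_eq)
  next
    case PInf
    then show ?thesis using lt d by simp
  qed simp
  then obtain xs where "xs \<in> {xs. is_walk E xs \<and> hd xs = p \<and> last xs = q}"
      "ereal (walk_len xs) < ereal (T * dist p q)"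
    unfolding graph_dist_def INF_less_iff by blast
  then show ?thesis by auto
qed

lemma dilation_ge_one:
  fixes P :: "'a::metric_space set"
  assumes "p \<in> P" "q \<in> P" "p \<noteq> q"
  shows "dilation P E \<ge> 1"
proof (rule ccontr)
  assume "\<not> dilation P E \<ge> 1"
  then have "dilation P E < ereal 1" by (simp add: one_ereal_def)
  from dilation_less_imp_short_walk[OF this assms] obtain xs
    where xs: "is_walk E xs" "hd xs = p" "last xs = q" "walk_len xs < 1 * dist p q"
    by blast
  then have "last xs \<in> set xs" by (cases xs) auto
  then have "dist p q \<le> walk_len xs" using dist_hd_le_walk_len xs(2,3) by metis
  then show False using xs(4) by simp
qed

section \<open>Stars on a grid\<close>

definition grid :: "nat \<Rightarrow> ('d::finite \<Rightarrow> nat) set" where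
  "grid L = {g. \<forall>j. g j < L}"

definition corner :: "('d::finite \<Rightarrow> nat) \<Rightarrow> real^'d" where
  "corner g = (\<chi> j. real (g j))"

text \<open>The offset \<open>1/(2m)\<close> in the other
  coordinates keeps spokes of different directions apart.\<close>

definition spoke :: "nat \<Rightarrow> 'd::finite \<Rightarrow> ('d \<Rightarrow> nat) \<Rightarrow> nat \<Rightarrow> real^'d" where
  "spoke m i g t = (\<chi> j. real (g j) + (if j = i then real t / real m else 1 / (2 * real m)))"

lemma spoke_nth:
  "spoke m i g t $ j = real (g j) + (if j = i then real t / real m else 1 / (2 * real m))"
  by (simp add: spoke_def)

lemma grid_eq_PiE: "grid L = PiE UNIV (\<lambda>_. {..<L})"
  by (auto simp: grid_def PiE_def Pi_def extensional_def)

lemma finite_grid: "finite (grid L)"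
  unfolding grid_eq_PiE by (intro finite_PiE) auto

lemma card_grid: "card (grid L :: ('d::finite \<Rightarrow> nat) set) = L ^ CARD('d)"
  unfolding grid_eq_PiE by (simp add: card_PiE)

lemma spoke_inj:
  fixes i i' :: "'d::finite"
  assumes m: "m > 0" and t: "t < m" "t' < m" and eq: "spoke m i g t = spoke m i' g' t'"
  shows "i = i' \<and> g = g' \<and> t = t'"
proof -
  define c where "c i g t j = 2 * m * g j + (if j = i then 2 * t else 1)" for i g t and j :: 'd
  have scaled: "real (c i g t j) = 2 * real m * (spoke m i g t $ j)" for i g t j
    using m by (simp add: c_def spoke_nth field_simps)
  have c_eq: "c i g t j = c i' g' t' j" for j
    using scaled[of i g t j] scaled[of i' g' t' j] eq by (metis of_nat_eq_iff)
  have "i = i'"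
  proof (rule ccontr)
    assume "i \<noteq> i'"
    then have "odd (c i' g' t' i)" by (simp add: c_def)
    moreover have "even (c i g t i)" by (simp add: c_def)
    ultimately show False using c_eq[of i] by simp
  qed
  then have "g j = g' j" if "j \<noteq> i" for j
    using c_eq[of j] that m by (simp add: c_def)
  moreover have i: "m * g i + t = m * g' i + t'"
    using c_eq[of i] \<open>i = i'\<close> by (simp add: c_def)
  then have "(m * g i + t) div m = (m * g' i + t') div m" by simp
  then have "g i = g' i" using t m by simp
  moreover from this have "t = t'" using i by simp
  ultimately show ?thesis using \<open>i = i'\<close> by (metis ext)
qed

lemma inj_on_spoke:
  assumes "m > 0"
  shows "inj_on (\<lambda>(i, g, t). spoke m i g t) (UNIV \<times> G \<times> {..<m})"
proof (rule inj_onI)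
  fix x y assume xy: "x \<in> UNIV \<times> G \<times> {..<m}" "y \<in> UNIV \<times> G \<times> {..<m}"
    "(\<lambda>(i, g, t). spoke m i g t) x = (\<lambda>(i, g, t). spoke m i g t) y"
  obtain i g t i' g' t' where "x = (i, g, t)" "y = (i', g', t')" by (cases x, cases y) auto
  with xy spoke_inj[OF assms, of t t' i g i' g'] show "x = y" by auto
qed

lemma card_grid_agreeing_off:
  "card {g \<in> grid L. \<forall>j. j \<notin> A \<longrightarrow> g j = r j} \<le> L ^ card (A :: 'd::finite set)"
proof -
  define G where "G = {g \<in> grid L. \<forall>j. j \<notin> A \<longrightarrow> g j = r j}"
  have "inj_on (\<lambda>g. restrict g A) G"
  proof (rule inj_onI)
    fix g g' assume gg': "g \<in> G" "g' \<in> G" and eq: "restrict g A = restrict g' A"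
    show "g = g'"
    proof
      fix j show "g j = g' j"
        using fun_cong[OF eq, of j] gg' by (cases "j \<in> A") (auto simp: G_def)
    qed
  qed
  moreover have "(\<lambda>g. restrict g A) ` G \<subseteq> PiE A (\<lambda>_. {..<L})"
    by (auto simp: G_def grid_def)
  moreover have "finite (PiE A (\<lambda>_. {..<L}))" by (intro finite_PiE) auto
  ultimately have "card G \<le> card (PiE A (\<lambda>_. {..<L}))" by (rule card_inj_on_le)
  then show ?thesis by (simp add: G_def card_PiE)
qed

lemma dist_le_sum_abs: "dist (x::real^'d::finite) y \<le> (\<Sum>j\<in>UNIV. \<bar>x $ j - y $ j\<bar>)"
  using norm_le_l1_cart[of "x - y"] by (simp add: dist_norm)

lemma dist_le_if_one_coord_differs:
  fixes x y :: "real^'d::finite"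
  assumes "\<And>j. j \<noteq> i \<Longrightarrow> x $ j = y $ j"
  shows "dist x y \<le> \<bar>x $ i - y $ i\<bar>"
proof -
  have "(\<Sum>j\<in>UNIV. \<bar>x $ j - y $ j\<bar>) = (\<Sum>j\<in>UNIV. if j = i then \<bar>x $ i - y $ i\<bar> else 0)"
    using assms by (intro sum.cong) auto
  then show ?thesis using dist_le_sum_abs[of x y] by simp
qed

lemma dist_spoke_Suc: "m > 0 \<Longrightarrow> dist (spoke m i g t) (spoke m i g (Suc t)) \<le> 1 / real m"
  using dist_le_if_one_coord_differs[of i "spoke m i g t" "spoke m i g (Suc t)"]
  by (simp add: spoke_nth add_divide_distrib)

lemma dist_spoke_last_spoke_next:
  "m > 0 \<Longrightarrow> dist (spoke m i g (m - 1)) (spoke m i (g(i := Suc (g i))) 0) \<le> 1 / real m"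
  using dist_le_if_one_coord_differs[of i "spoke m i g (m - 1)" "spoke m i (g(i := Suc (g i))) 0"]
  by (simp add: spoke_nth of_nat_diff field_simps)

lemma dist_spoke_0:
  assumes "m > 0"
  shows "dist (spoke m i g 0) (spoke m i' g 0) \<le> 1 / real m"
proof -
  have "\<bar>spoke m i g 0 $ j - spoke m i' g 0 $ j\<bar>
      \<le> (if j = i then 1 / (2 * real m) else 0) + (if j = i' then 1 / (2 * real m) else 0)" for j
    using assms by (simp add: spoke_nth)
  then have "(\<Sum>j\<in>UNIV. \<bar>spoke m i g 0 $ j - spoke m i' g 0 $ j\<bar>)
      \<le> (\<Sum>j\<in>UNIV. (if j = i then 1 / (2 * real m) else 0) + (if j = i' then 1 / (2 * real m) else 0))"
    by (intro sum_mono)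
  also have "\<dots> = 1 / real m" by (simp add: sum.distrib)
  finally show ?thesis using dist_le_sum_abs[of "spoke m i g 0" "spoke m i' g 0"] by linarith
qed

lemma dist_corner_spoke:
  fixes g :: "'d::finite \<Rightarrow> nat"
  assumes "m > 0" "t < m"
  shows "dist (corner g) (spoke m i g t) \<le> real CARD('d)"
proof -
  have "\<bar>corner g $ j - spoke m i g t $ j\<bar> \<le> 1" for j :: 'd
    using assms by (simp add: spoke_nth corner_def)
  then have "(\<Sum>j\<in>UNIV. \<bar>corner g $ j - spoke m i g t $ j\<bar>) \<le> (\<Sum>j\<in>(UNIV::'d set). 1)"
    by (intro sum_mono)
  then show ?thesis using dist_le_sum_abs[of "corner g" "spoke m i g t"] by simp
qed

lemma
  shows finite_nat_near: "finite {x::nat. \<bar>real x - a\<bar> < real R}"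
    and card_nat_near_le: "card {x::nat. \<bar>real x - a\<bar> < real R} \<le> 2 * R"
proof -
  define x0 where "x0 = nat \<lceil>a - real R\<rceil>"
  have "{x::nat. \<bar>real x - a\<bar> < real R} \<subseteq> {x0..<x0 + 2 * R}"
  proof
    fix x assume "x \<in> {x::nat. \<bar>real x - a\<bar> < real R}"
    then have x: "a - real R < real x" "real x < a + real R" by auto
    then have "x0 \<le> x" unfolding x0_def by (simp add: nat_le_iff ceiling_le_iff)
    moreover have "a - real R \<le> real x0" unfolding x0_def by linarith
    then have "x < x0 + 2 * R" using x(2) by linarith
    ultimately show "x \<in> {x0..<x0 + 2 * R}" by simp
  qed
  then show "finite {x::nat. \<bar>real x - a\<bar> < real R}" "card {x::nat. \<bar>real x - a\<bar> < real R} \<le> 2 * R"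
    using finite_subset card_mono[of "{x0..<x0 + 2 * R}"] by fastforce+
qed

text \<open>The enumeration \<open>\<sigma>\<close> of the axes fixes the order in which a staircase path between
  two cells changes coordinates.\<close>

locale star_grid_spanner =
  fixes P :: "(real^'d::finite) set" and E :: "(real^'d) set set" and S :: "(real^'d) set"
    and m L :: nat and \<sigma> :: "nat \<Rightarrow> 'd"
  assumes finite_P: "finite P" and E_simple: "E \<subseteq> simple_edges P" and S_subset: "S \<subseteq> P"
    and balanced: "\<And>X. X \<subseteq> P - S \<Longrightarrow> connected_in E X \<Longrightarrow> 2 * card X \<le> card P"
    and short_walks: "\<And>p q. p \<in> P \<Longrightarrow> q \<in> P \<Longrightarrow> p \<noteq> q \<Longrightarrow>
        \<exists>xs. is_walk E xs \<and> hd xs = p \<and> last xs = q \<and> walk_len xs < real m * dist p q"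
    and spoke_in_P: "\<And>i g t. g \<in> grid L \<Longrightarrow> t < m \<Longrightarrow> spoke m i g t \<in> P"
    and m_pos: "m > 0"
    and \<sigma>_bij: "bij_betw \<sigma> {..<CARD('d)} UNIV"
begin

definition linked :: "((real^'d) \<times> (real^'d)) set" where
  "linked = (edge_rel E (P - S))\<^sup>*"

definition good_cell :: "('d \<Rightarrow> nat) \<Rightarrow> bool" where
  "good_cell g \<longleftrightarrow> g \<in> grid L \<and> (\<forall>s\<in>S. real CARD('d) + 2 \<le> dist (corner g) s)"

definition hub :: "('d \<Rightarrow> nat) \<Rightarrow> real^'d" where
  "hub g = spoke m (\<sigma> 0) g 0"

lemma linked_refl: "(x, x) \<in> linked"
  unfolding linked_def by simp

lemma linked_trans: "(x, y) \<in> linked \<Longrightarrow> (y, z) \<in> linked \<Longrightarrow> (x, z) \<in> linked"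
  unfolding linked_def by (rule rtrancl_trans)

lemma linked_sym: "(x, y) \<in> linked \<Longrightarrow> (y, x) \<in> linked"
  unfolding linked_def by (rule edge_rel_rtrancl_sym)

text \<open>A walk of length less than \<open>m \<cdot> 1/m = 1\<close> cannot reach \<open>S\<close> from a point at distance \<open>\<ge> 1\<close>.\<close>

lemma close_points_linked:
  assumes p: "p \<in> P" and q: "q \<in> P" and pq: "dist p q \<le> 1 / real m" and far: "\<forall>s\<in>S. 1 \<le> dist p s"
  shows "(p, q) \<in> linked"
proof (cases "p = q")
  case True
  then show ?thesis by (simp add: linked_refl)
next
  case False
  then obtain xs where xs: "is_walk E xs" "hd xs = p" "last xs = q" "walk_len xs < real m * dist p q"
    using short_walks p q by blast
  have "real m * dist p q \<le> 1" using pq m_pos by (simp add: field_simps)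
  then have short: "walk_len xs < 1" using xs(4) by simp
  have "w \<notin> S" if "w \<in> set xs" for w
    using far dist_hd_le_walk_len[OF that] xs(2) short by fastforce
  moreover have "set xs \<subseteq> P" using is_walk_set_subset[OF xs(1) E_simple] xs(2) p by simp
  ultimately have "set xs \<subseteq> P - S" by auto
  then show ?thesis
    using is_walk_imp_edge_rel_rtrancl[OF xs(1)] xs(2,3) unfolding linked_def by blast
qed

lemma spoke_far_from_S:
  assumes g: "good_cell g" and t: "t < m" and s: "s \<in> S"
  shows "1 \<le> dist (spoke m i g t) s"
proof -
  have "real CARD('d) + 2 \<le> dist (corner g) s" using g s by (auto simp: good_cell_def)
  moreover have "dist (corner g) (spoke m i g t) \<le> real CARD('d)"
    using dist_corner_spoke m_pos t by blast
  moreover have "dist (corner g) s \<le> dist (corner g) (spoke m i g t) + dist (spoke m i g t) s"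
    by (rule dist_triangle)
  ultimately show ?thesis by linarith
qed

lemma spoke_in_P_minus_S:
  assumes g: "good_cell g" and t: "t < m"
  shows "spoke m i g t \<in> P - S"
proof
  show "spoke m i g t \<in> P" using spoke_in_P g t by (auto simp: good_cell_def)
  show "spoke m i g t \<notin> S"
  proof
    assume "spoke m i g t \<in> S"
    from spoke_far_from_S[OF g t this, of i] show False by simp
  qed
qed

lemma spoke_linked_spoke_0:
  assumes g: "good_cell g"
  shows "t < m \<Longrightarrow> (spoke m i g 0, spoke m i g t) \<in> linked"
proof (induction t)
  case 0
  then show ?case by (simp add: linked_refl)
next
  case (Suc t)
  then have t: "t < m" "Suc t < m" by auto
  have "(spoke m i g t, spoke m i g (Suc t)) \<in> linked"
    using spoke_in_P_minus_S[OF g t(1)] spoke_in_P_minus_S[OF g t(2)] spoke_far_from_S[OF g t(1)]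
    by (intro close_points_linked dist_spoke_Suc m_pos) auto
  then show ?case using Suc t linked_trans by auto
qed

lemma hub_linked_spoke:
  assumes g: "good_cell g" and t: "t < m"
  shows "(hub g, spoke m i g t) \<in> linked"
proof -
  have "(spoke m (\<sigma> 0) g 0, spoke m i g 0) \<in> linked"
    using spoke_in_P_minus_S[OF g m_pos] spoke_far_from_S[OF g m_pos]
    by (intro close_points_linked dist_spoke_0 m_pos) auto
  then show ?thesis unfolding hub_def using spoke_linked_spoke_0[OF g t] linked_trans by blast
qed

lemma hub_in_P_minus_S: "good_cell g \<Longrightarrow> hub g \<in> P - S"
  unfolding hub_def using spoke_in_P_minus_S m_pos by blast

lemma hub_linked_hub_next:
  assumes g: "good_cell g" and g': "good_cell (g(j := Suc (g j)))"
  shows "(hub g, hub (g(j := Suc (g j)))) \<in> linked"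
proof -
  have m1: "m - 1 < m" using m_pos by simp
  have "(spoke m j g (m - 1), spoke m j (g(j := Suc (g j))) 0) \<in> linked"
    using spoke_in_P_minus_S[OF g m1] spoke_in_P_minus_S[OF g' m_pos] spoke_far_from_S[OF g m1]
    by (intro close_points_linked dist_spoke_last_spoke_next m_pos) auto
  then show ?thesis
    using hub_linked_spoke[OF g m1] hub_linked_spoke[OF g' m_pos] linked_trans linked_sym by blast
qed

lemma hub_linked_along_axis:
  assumes good: "\<forall>v. min a b \<le> v \<and> v \<le> max a b \<longrightarrow> good_cell (u(j := v))"
  shows "(hub (u(j := a)), hub (u(j := b))) \<in> linked"
proof -
  have "(hub (u(j := a)), hub (u(j := b))) \<in> linked"
    if "\<forall>v. a \<le> v \<and> v \<le> b \<longrightarrow> good_cell (u(j := v))" "a \<le> b" for a b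
    using that
  proof (induction b)
    case (Suc b)
    show ?case
    proof (cases "a = Suc b")
      case False
      then have "a \<le> b" using Suc.prems by simp
      moreover have "\<forall>v. a \<le> v \<and> v \<le> b \<longrightarrow> good_cell (u(j := v))"
        using Suc.prems(1) by (auto simp: fun_upd_def)
      ultimately have "(hub (u(j := a)), hub (u(j := b))) \<in> linked" using Suc.IH by blast
      moreover have "(hub (u(j := b)), hub (u(j := Suc b))) \<in> linked"
        using hub_linked_hub_next[of "u(j := b)" j] Suc.prems \<open>a \<le> b\<close> by simp
      ultimately show ?thesis using linked_trans by blast
    qed (simp add: linked_refl)
  qed (simp add: linked_refl)
  then show ?thesis using good linked_sym by (cases "a \<le> b") (auto simp: min_def max_def)
qed

text \<open>The staircase path from \<open>g\<close> to \<open>h\<close> changes one coordinate at a time, along the axes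
  \<open>\<sigma> 0, \<sigma> 1, \<dots>\<close>; \<open>staircase l g h\<close> is the cell it reaches after \<open>l\<close> axes.\<close>

definition staircase :: "nat \<Rightarrow> ('d \<Rightarrow> nat) \<Rightarrow> ('d \<Rightarrow> nat) \<Rightarrow> ('d \<Rightarrow> nat)" where
  "staircase l g h = (\<lambda>j. if j \<in> \<sigma> ` {..<l} then h j else g j)"

definition clear_staircase :: "('d \<Rightarrow> nat) \<Rightarrow> ('d \<Rightarrow> nat) \<Rightarrow> bool" where
  "clear_staircase g h \<longleftrightarrow> (\<forall>l<CARD('d). \<forall>v. min (g (\<sigma> l)) (h (\<sigma> l)) \<le> v \<and> v \<le> max (g (\<sigma> l)) (h (\<sigma> l))
      \<longrightarrow> good_cell ((staircase l g h)(\<sigma> l := v)))"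

lemma inj_on_\<sigma>: "inj_on \<sigma> {..<CARD('d)}"
  using \<sigma>_bij by (simp add: bij_betw_def)

lemma \<sigma>_notin_image_lessThan: "l < CARD('d) \<Longrightarrow> \<sigma> l \<notin> \<sigma> ` {..<l}"
  using inj_on_\<sigma> by (auto dest: inj_onD)

lemma staircase_0: "staircase 0 g h = g"
  by (simp add: staircase_def)

lemma staircase_CARD: "staircase CARD('d) g h = h"
  using \<sigma>_bij by (simp add: staircase_def bij_betw_def)

lemma staircase_Suc: "staircase (Suc l) g h = (staircase l g h)(\<sigma> l := h (\<sigma> l))"
  by (auto simp: staircase_def lessThan_Suc)

lemma staircase_upd_self: "l < CARD('d) \<Longrightarrow> (staircase l g h)(\<sigma> l := g (\<sigma> l)) = staircase l g h"
  using \<sigma>_notin_image_lessThan by (auto simp: staircase_def)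

lemma hub_linked_if_clear_staircase:
  assumes "clear_staircase g h"
  shows "(hub g, hub h) \<in> linked"
proof -
  have "l \<le> CARD('d) \<Longrightarrow> (hub g, hub (staircase l g h)) \<in> linked" for l
  proof (induction l)
    case 0
    then show ?case by (simp add: staircase_0 linked_refl)
  next
    case (Suc l)
    then have l: "l < CARD('d)" by simp
    have "(hub ((staircase l g h)(\<sigma> l := g (\<sigma> l))), hub ((staircase l g h)(\<sigma> l := h (\<sigma> l)))) \<in> linked"
      using assms l unfolding clear_staircase_def by (intro hub_linked_along_axis) auto
    then have "(hub (staircase l g h), hub (staircase (Suc l) g h)) \<in> linked"
      using staircase_upd_self[OF l] staircase_Suc by simp
    then show ?case using Suc l linked_trans by simp
  qed
  then show ?thesis using staircase_CARD by (metis order_refl)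
qed

definition good_cells :: "('d \<Rightarrow> nat) set" where
  "good_cells = {g. good_cell g}"

definition bad_cells :: "('d \<Rightarrow> nat) set" where
  "bad_cells = grid L - good_cells"

definition staircase_reachable :: "('d \<Rightarrow> nat) \<Rightarrow> ('d \<Rightarrow> nat) set" where
  "staircase_reachable g = {h \<in> good_cells. clear_staircase g h}"

lemma good_cells_subset_grid: "good_cells \<subseteq> grid L"
  by (auto simp: good_cells_def good_cell_def)

lemma finite_good_cells: "finite good_cells"
  using good_cells_subset_grid finite_grid finite_subset by blast

text \<open>All spokes of cells reachable by a clear staircase from \<open>g\<close> lie in one connected
  component of the graph minus \<open>S\<close>, which has at most half of the points.\<close>

lemma card_staircase_reachable:
  assumes g: "good_cell g"
  shows "2 * (CARD('d) * card (staircase_reachable g) * m) \<le> card P"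
proof -
  define C where "C = {y. (hub g, y) \<in> (edge_rel E (P - S))\<^sup>*}"
  have C: "C \<subseteq> P - S" "connected_in E C"
    unfolding C_def using reachable_subset[OF hub_in_P_minus_S[OF g]]
      connected_in_reachable[OF hub_in_P_minus_S[OF g]] by blast+
  define f :: "'d \<times> ('d \<Rightarrow> nat) \<times> nat \<Rightarrow> real^'d" where "f = (\<lambda>(i, h, t). spoke m i h t)"
  have "f ` (UNIV \<times> staircase_reachable g \<times> {..<m}) \<subseteq> C"
  proof clarify
    fix i h t assume "h \<in> staircase_reachable g" "t < m"
    then have "good_cell h" "(hub g, hub h) \<in> linked" "(hub h, spoke m i h t) \<in> linked"
      using hub_linked_if_clear_staircase hub_linked_spoke
      by (auto simp: staircase_reachable_def good_cells_def)
    then show "f (i, h, t) \<in> C" using linked_trans by (auto simp: C_def f_def linked_def)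
  qed
  moreover have "finite C" using C finite_P finite_subset by blast
  ultimately have "card (f ` (UNIV \<times> staircase_reachable g \<times> {..<m})) \<le> card C"
    by (rule card_mono[rotated])
  moreover have "card (f ` (UNIV \<times> staircase_reachable g \<times> {..<m}))
      = CARD('d) * card (staircase_reachable g) * m"
    using card_image[OF inj_on_spoke[OF m_pos, of "staircase_reachable g"]]
    by (simp add: f_def card_cartesian_product)
  moreover have "2 * card C \<le> card P" using balanced C by blast
  ultimately show ?thesis by linarith
qed

definition blocked_pairs :: "(('d \<Rightarrow> nat) \<times> ('d \<Rightarrow> nat)) set" where
  "blocked_pairs = {(g, h). g \<in> good_cells \<and> h \<in> good_cells \<and> \<not> clear_staircase g h}"

text \<open>Pairs whose staircase passes through the cell \<open>r\<close> while moving along axis \<open>\<sigma> l\<close>.\<close>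

definition blocked_at :: "('d \<Rightarrow> nat) \<Rightarrow> nat \<Rightarrow> (('d \<Rightarrow> nat) \<times> ('d \<Rightarrow> nat)) set" where
  "blocked_at r l = {(g, h). g \<in> grid L \<and> h \<in> grid L
     \<and> (\<forall>j. j \<notin> \<sigma> ` {..l} \<longrightarrow> g j = r j) \<and> (\<forall>j\<in>\<sigma> ` {..<l}. h j = r j)}"

lemma card_blocked_at:
  assumes l: "l < CARD('d)"
  shows "card (blocked_at r l) \<le> L ^ (CARD('d) + 1)"
proof -
  define agree where "agree A = {g \<in> grid L. \<forall>j. j \<notin> A \<longrightarrow> g j = r j}" for A
  have "blocked_at r l \<subseteq> agree (\<sigma> ` {..l}) \<times> agree (- \<sigma> ` {..<l})"
    by (auto simp: blocked_at_def agree_def)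
  moreover have "finite (agree A)" for A
    unfolding agree_def by (rule finite_subset[OF _ finite_grid]) auto
  ultimately have "card (blocked_at r l) \<le> card (agree (\<sigma> ` {..l})) * card (agree (- \<sigma> ` {..<l}))"
    by (metis card_cartesian_product card_mono finite_cartesian_product)
  also have "\<dots> \<le> L ^ card (\<sigma> ` {..l}) * L ^ card (- \<sigma> ` {..<l})"
    unfolding agree_def by (intro mult_le_mono card_grid_agreeing_off)
  also have "card (\<sigma> ` {..l}) = Suc l"
    using l by (subst card_image[OF inj_on_subset[OF inj_on_\<sigma>]]) auto
  also have "card (- \<sigma> ` {..<l}) = CARD('d) - l"
  proof -
    have "card (\<sigma> ` {..<l}) = l"
      using l by (subst card_image[OF inj_on_subset[OF inj_on_\<sigma>]]) auto
    then show ?thesis by (simp add: Compl_eq_Diff_UNIV card_Diff_subset)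
  qed
  also have "L ^ Suc l * L ^ (CARD('d) - l) = L ^ (CARD('d) + 1)"
    using l by (simp add: power_add[symmetric])
  finally show ?thesis .
qed

lemma blocked_pairs_subset: "blocked_pairs \<subseteq> (\<Union>r\<in>bad_cells. \<Union>l<CARD('d). blocked_at r l)"
proof clarify
  fix g h assume "(g, h) \<in> blocked_pairs"
  then have gh: "g \<in> grid L" "h \<in> grid L" and "\<not> clear_staircase g h"
    using good_cells_subset_grid by (auto simp: blocked_pairs_def)
  then obtain l v where l: "l < CARD('d)" and v: "min (g (\<sigma> l)) (h (\<sigma> l)) \<le> v" "v \<le> max (g (\<sigma> l)) (h (\<sigma> l))"
      and bad: "\<not> good_cell ((staircase l g h)(\<sigma> l := v))"
    unfolding clear_staircase_def by blast
  define r where "r = (staircase l g h)(\<sigma> l := v)"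
  have "g (\<sigma> l) < L" "h (\<sigma> l) < L" using gh by (auto simp: grid_def)
  then have "v < L" using v(2) by (simp add: max_def split: if_splits)
  then have "r \<in> grid L" using gh by (auto simp: r_def staircase_def grid_def)
  then have "r \<in> bad_cells" using bad by (auto simp: bad_cells_def good_cells_def r_def)
  moreover have "(g, h) \<in> blocked_at r l"
  proof -
    have "g j = r j" if "j \<notin> \<sigma> ` {..l}" for j
    proof -
      have "j \<noteq> \<sigma> l" "j \<notin> \<sigma> ` {..<l}" using that by auto
      then show ?thesis by (simp add: r_def staircase_def)
    qed
    moreover have "h j = r j" if "j \<in> \<sigma> ` {..<l}" for j
    proof -
      have "j \<noteq> \<sigma> l" by (rule notI) (use that \<sigma>_notin_image_lessThan[OF l] in simp)
      then show ?thesis using that by (simp add: r_def staircase_def)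
    qed
    ultimately show ?thesis using gh by (simp add: blocked_at_def)
  qed
  ultimately show "(g, h) \<in> (\<Union>r\<in>bad_cells. \<Union>l<CARD('d). blocked_at r l)" using l by blast
qed

lemma card_blocked_pairs: "card blocked_pairs \<le> card bad_cells * CARD('d) * L ^ (CARD('d) + 1)"
proof -
  have fin: "finite bad_cells" by (simp add: bad_cells_def finite_grid)
  moreover have "finite (blocked_at r l)" for r l
    by (rule finite_subset[of _ "grid L \<times> grid L"]) (auto simp: blocked_at_def finite_grid)
  ultimately have "card blocked_pairs \<le> card (\<Union>r\<in>bad_cells. \<Union>l<CARD('d). blocked_at r l)"
    by (intro card_mono blocked_pairs_subset) auto
  also have "\<dots> \<le> (\<Sum>r\<in>bad_cells. \<Sum>l<CARD('d). card (blocked_at r l))"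
    by (intro order_trans[OF card_UN_le[OF fin]] sum_mono card_UN_le) auto
  also have "\<dots> \<le> (\<Sum>r\<in>bad_cells. \<Sum>l<CARD('d). L ^ (CARD('d) + 1))"
    by (intro sum_mono card_blocked_at) auto
  finally show ?thesis by simp
qed

text \<open>Double counting: a pair of good cells is either blocked or joined by a clear staircase,
  and by \<open>card_staircase_reachable\<close> each good cell has few partners of the second kind.\<close>

lemma card_good_cells_squared:
  "2 * CARD('d) * m * (card good_cells)\<^sup>2 \<le> card good_cells * card P + 2 * CARD('d) * m * card blocked_pairs"
proof -
  have fin: "finite (staircase_reachable g)" for g
    using finite_good_cells by (simp add: staircase_reachable_def)
  have "finite blocked_pairs"
    by (rule finite_subset[of _ "good_cells \<times> good_cells"]) (auto simp: blocked_pairs_def finite_good_cells)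
  then have "finite (Sigma good_cells staircase_reachable \<union> blocked_pairs)"
    using finite_good_cells fin by auto
  then have "(card good_cells)\<^sup>2 \<le> card (Sigma good_cells staircase_reachable \<union> blocked_pairs)"
    unfolding power2_eq_square card_cartesian_product[symmetric]
    by (rule card_mono) (auto simp: staircase_reachable_def blocked_pairs_def)
  also have "\<dots> \<le> card (Sigma good_cells staircase_reachable) + card blocked_pairs"
    by (rule card_Un_le)
  also have "card (Sigma good_cells staircase_reachable) = (\<Sum>g\<in>good_cells. card (staircase_reachable g))"
    by (simp add: card_SigmaI finite_good_cells fin)
  finally have "2 * CARD('d) * m * (card good_cells)\<^sup>2
      \<le> 2 * CARD('d) * m * ((\<Sum>g\<in>good_cells. card (staircase_reachable g)) + card blocked_pairs)"
    by (rule mult_le_mono2)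
  also have "\<dots> = (\<Sum>g\<in>good_cells. 2 * (CARD('d) * card (staircase_reachable g) * m))
      + 2 * CARD('d) * m * card blocked_pairs"
    by (simp add: sum_distrib_left algebra_simps)
  also have "(\<Sum>g\<in>good_cells. 2 * (CARD('d) * card (staircase_reachable g) * m)) \<le> (\<Sum>g\<in>good_cells. card P)"
    by (intro sum_mono card_staircase_reachable) (simp add: good_cells_def)
  finally show ?thesis by simp
qed

lemma card_bad_cells: "card bad_cells \<le> card S * (2 * CARD('d) + 4) ^ CARD('d)"
proof -
  define R where "R = CARD('d) + 2"
  define near where "near s = PiE UNIV (\<lambda>j. {x::nat. \<bar>real x - s $ j\<bar> < real R})" for s :: "real^'d"
  have "bad_cells \<subseteq> (\<Union>s\<in>S. near s)"
  proof
    fix g assume "g \<in> bad_cells"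
    then obtain s where s: "s \<in> S" "dist (corner g) s < real CARD('d) + 2"
      by (auto simp: bad_cells_def good_cells_def good_cell_def not_le)
    have "\<bar>real (g j) - s $ j\<bar> < real R" for j
      using component_le_norm_cart[of "corner g - s" j] s(2) by (simp add: corner_def dist_norm R_def)
    then have "g \<in> near s" by (simp add: near_def PiE_def Pi_def extensional_def)
    then show "g \<in> (\<Union>s\<in>S. near s)" using s by blast
  qed
  moreover have near: "finite (near s)" "card (near s) \<le> (2 * CARD('d) + 4) ^ CARD('d)" for s
  proof -
    show "finite (near s)" using finite_nat_near by (simp add: near_def finite_PiE)
    have "card (near s) = (\<Prod>j\<in>UNIV. card {x::nat. \<bar>real x - s $ j\<bar> < real R})"
      by (simp add: near_def card_PiE)
    also have "\<dots> \<le> (\<Prod>j\<in>(UNIV::'d set). 2 * R)"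
      using card_nat_near_le by (intro prod_mono) auto
    also have "\<dots> = (2 * R) ^ CARD('d)" by simp
    also have "2 * R = 2 * CARD('d) + 4" by (simp add: R_def)
    finally show "card (near s) \<le> (2 * CARD('d) + 4) ^ CARD('d)" .
  qed
  moreover have "finite S" using S_subset finite_P finite_subset by blast
  ultimately have "card bad_cells \<le> card (\<Union>s\<in>S. near s)"
    by (intro card_mono) auto
  also have "\<dots> \<le> (\<Sum>s\<in>S. card (near s))" by (rule card_UN_le[OF \<open>finite S\<close>])
  also have "\<dots> \<le> (\<Sum>s\<in>S. (2 * CARD('d) + 4) ^ CARD('d))" by (intro sum_mono near)
  finally show ?thesis by simp
qed

lemma card_good_plus_bad: "card good_cells + card bad_cells = L ^ CARD('d)"
proof -
  have "card good_cells \<le> card (grid L :: ('d \<Rightarrow> nat) set)"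
    by (rule card_mono[OF finite_grid good_cells_subset_grid])
  moreover have "card (grid L :: ('d \<Rightarrow> nat) set) = L ^ CARD('d)" by (rule card_grid)
  ultimately show ?thesis
    using finite_good_cells good_cells_subset_grid by (simp add: bad_cells_def card_Diff_subset)
qed

end

section \<open>The lower bound\<close>

lemma exists_finite_superset_card:
  assumes "infinite (UNIV :: 'a set)" "finite (C :: 'a set)" "card C \<le> n"
  shows "\<exists>P. finite P \<and> card P = n \<and> C \<subseteq> P"
proof -
  have "infinite (UNIV - C)" using assms(1,2) by (simp add: Diff_infinite_finite)
  then obtain X where X: "X \<subseteq> UNIV - C" "finite X" "card X = n - card C"
    using infinite_arbitrarily_large by blast
  moreover have "C \<inter> X = {}" using X by auto
  ultimately have "card (C \<union> X) = n" using assms(2,3) by (simp add: card_Un_disjoint)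
  then show ?thesis using X assms(2) by blast
qed

lemma infinite_UNIV_real_vec: "infinite (UNIV :: (real^'d::finite) set)"
  by (rule infinite_UNIV_vec[OF infinite_UNIV_char_0])

lemma exists_points_dilation_ge_one:
  assumes "n \<ge> 2"
  shows "\<exists>P :: (real^'d::finite) set. finite P \<and> card P = n \<and> (\<forall>E. dilation P E \<ge> 1)"
proof -
  obtain P :: "(real^'d) set" where P: "finite P" "card P = n"
    using exists_finite_superset_card[OF infinite_UNIV_real_vec, of "{}" n] by auto
  moreover have "\<not> card P \<le> Suc 0" using assms P by simp
  ultimately obtain p q where "p \<in> P" "q \<in> P" "p \<noteq> q"
    using card_le_Suc0_iff_eq by blast
  then show ?thesis using P dilation_ge_one by blast
qed

lemma exists_point_set_with_stars:
  assumes m: "m > 0" and n: "CARD('d::finite) * L ^ CARD('d) * m \<le> n"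
  shows "\<exists>P :: (real^'d) set. finite P \<and> card P = n \<and> (\<forall>i g t. g \<in> grid L \<longrightarrow> t < m \<longrightarrow> spoke m i g t \<in> P)"
proof -
  define C :: "(real^'d) set" where "C = (\<lambda>(i, g, t). spoke m i g t) ` (UNIV \<times> grid L \<times> {..<m})"
  have "card C = CARD('d) * L ^ CARD('d) * m"
    unfolding C_def using card_image[OF inj_on_spoke[OF m, of "grid L :: ('d \<Rightarrow> nat) set"]]
    by (simp add: card_cartesian_product card_grid mult.assoc)
  moreover have "finite C" unfolding C_def by (simp add: finite_grid)
  ultimately obtain P where P: "finite P" "card P = n" "C \<subseteq> P"
    using exists_finite_superset_card[OF infinite_UNIV_real_vec, of C n] n by auto
  moreover have "spoke m i g t \<in> C" if "g \<in> grid L" "t < m" for i g t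
    unfolding C_def using that by (intro image_eqI[of _ _ "(i, g, t)"]) auto
  ultimately show ?thesis by blast
qed

lemma quadratic_count_contradiction:
  fixes G N n m B D :: real
  assumes m: "m \<ge> 10" and N: "N > 0" and G: "G \<ge> 39/40 * N" and n: "n \<le> D * N * (m + 1)" and D: "D > 0"
    and count: "2 * D * m * G\<^sup>2 \<le> G * n + 2 * D * m * B" and B: "B \<le> N\<^sup>2 / 20"
  shows False
proof -
  have "D * N * (m + 1) \<le> D * N * (11/10 * m)" using m D N by (intro mult_left_mono) auto
  then have "G * n \<le> G * (D * N * (11/10 * m))" using n G N by (intro mult_left_mono) auto
  moreover have "2 * D * m * B \<le> 2 * D * m * (N\<^sup>2 / 20)" using B D m by (intro mult_left_mono) auto
  ultimately have "(D * m) * (2 * G\<^sup>2) \<le> (D * m) * (11/10 * G * N + N\<^sup>2 / 10)"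
    using count by (simp add: algebra_simps)
  then have upper: "2 * G\<^sup>2 \<le> 11/10 * G * N + N\<^sup>2 / 10" using D m by simp
  have "G * (2 * G - 11/10 * N) \<ge> (39/40 * N) * (2 * (39/40 * N) - 11/10 * N)"
    using G N by (intro mult_mono) auto
  then have "2 * G\<^sup>2 - 11/10 * G * N \<ge> 663/800 * N\<^sup>2" by (simp add: algebra_simps power2_eq_square)
  moreover have "N\<^sup>2 > 0" using N by simp
  ultimately show False using upper by linarith
qed

text \<open>The separator must be large: otherwise few cells are spoiled, few staircases are blocked,
  and the double counting above forces a component with more than half of the points.\<close>

lemma (in star_grid_spanner) card_separator_large:
  assumes m: "m \<ge> 10" and L: "L \<ge> 1" and P: "card P \<le> CARD('d) * L ^ CARD('d) * (m + 1)"
  shows "L ^ (CARD('d) - 1) < 40 * CARD('d) * (2 * CARD('d) + 4) ^ CARD('d) * card S"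
proof (rule ccontr)
  define D where "D = CARD('d)"
  define K where "K = (2 * D + 4) ^ D"
  define N where "N = L ^ D"
  have D: "D \<ge> 1" by (simp add: D_def)
  assume "\<not> ?thesis"
  then have S: "40 * (card S * K * D) \<le> L ^ (D - 1)" by (simp add: D_def K_def ac_simps)
  have bad_S: "card bad_cells \<le> card S * K" using card_bad_cells by (simp add: D_def K_def)
  have bad: "40 * card bad_cells \<le> N"
  proof -
    have "40 * card bad_cells \<le> 40 * (card S * K)" using bad_S by simp
    also have "\<dots> \<le> 40 * (card S * K) * D" using D by (metis mult.right_neutral mult_le_mono2)
    also have "\<dots> \<le> L ^ (D - 1)" using S by (simp add: ac_simps)
    also have "\<dots> \<le> N" unfolding N_def using L by (intro power_increasing) auto
    finally show ?thesis .
  qed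
  have blocked: "20 * card blocked_pairs \<le> N\<^sup>2"
  proof -
    have "card blocked_pairs \<le> card bad_cells * D * L ^ (D + 1)"
      using card_blocked_pairs by (simp add: D_def)
    also have "\<dots> \<le> card S * K * D * L ^ (D + 1)"
      using bad_S by (intro mult_le_mono1)
    finally have "20 * card blocked_pairs \<le> (20 * (card S * K * D)) * L ^ (D + 1)" by simp
    also have "\<dots> \<le> L ^ (D - 1) * L ^ (D + 1)" using S by (intro mult_le_mono1) linarith
    also have "\<dots> = L ^ ((D - 1) + (D + 1))" by (rule power_add[symmetric])
    also have "(D - 1) + (D + 1) = D * 2" using D by simp
    also have "L ^ (D * 2) = N\<^sup>2" by (simp add: N_def power_mult)
    finally show ?thesis .
  qed
  have count: "real (2 * D * m * (card good_cells)\<^sup>2)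
      \<le> real (card good_cells * card P + 2 * D * m * card blocked_pairs)"
    using card_good_cells_squared by (simp only: of_nat_le_iff D_def)
  have good_bad: "real (card good_cells) + real (card bad_cells) = real N"
    using card_good_plus_bad by (simp only: N_def D_def flip: of_nat_add)
  have cards: "real (40 * card bad_cells) \<le> real N" "real (card P) \<le> real (D * N * (m + 1))"
      "real (20 * card blocked_pairs) \<le> real (N\<^sup>2)"
    using bad P blocked by (simp_all only: of_nat_le_iff N_def D_def)
  show False
  proof (rule quadratic_count_contradiction)
    show "real m \<ge> 10" "real N > 0" "real D > 0" using m L D by (auto simp: N_def)
    show "real (card good_cells) \<ge> 39/40 * real N" using good_bad cards(1) by simp
    show "real (card P) \<le> real D * real N * (real m + 1)" using cards(2) by (simp add: algebra_simps)
    show "2 * real D * real m * (real (card good_cells))\<^sup>2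
        \<le> real (card good_cells) * real (card P) + 2 * real D * real m * real (card blocked_pairs)"
      using count by simp
    show "real (card blocked_pairs) \<le> (real N)\<^sup>2 / 20" using cards(3) by simp
  qed
qed

lemma dilation_ge_if_has_td_width:
  fixes P :: "(real^'d::finite) set"
  assumes m: "m \<ge> 10" and L: "L \<ge> 1"
    and P: "finite P" "card P \<le> CARD('d) * L ^ CARD('d) * (m + 1)"
    and stars: "\<And>i g t. g \<in> grid L \<Longrightarrow> t < m \<Longrightarrow> spoke m i g t \<in> P"
    and k: "40 * CARD('d) * (2 * CARD('d) + 4) ^ CARD('d) * (k + 1) \<le> L ^ (CARD('d) - 1)"
    and E: "geometric_graph P E" "has_td_width P E k"
  shows "dilation P E \<ge> ereal m"
proof (rule ccontr)
  assume "\<not> dilation P E \<ge> ereal m"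
  then have dil: "dilation P E < ereal m" by simp
  obtain I F B where td: "tree_decomposition P E I F B" and bags: "\<forall>i\<in>I. card (B i) \<le> k + 1"
    using E(2) unfolding has_td_width_def by blast
  obtain i where i: "i \<in> I" and balanced: "\<forall>X. X \<subseteq> P - B i \<and> connected_in E X \<longrightarrow> 2 * card X \<le> card P"
    using tree_decomposition_balanced_bag[OF td P(1)] by blast
  obtain \<sigma> where \<sigma>: "bij_betw \<sigma> {..<CARD('d)} (UNIV :: 'd set)"
    using ex_bij_betw_nat_finite[of "UNIV :: 'd set"] by (auto simp: atLeast0LessThan)
  interpret star_grid_spanner P E "B i" m L \<sigma>
  proof
    show "B i \<subseteq> P" using td i by (auto simp: tree_decomposition_def)
    show "\<exists>xs. is_walk E xs \<and> hd xs = p \<and> last xs = q \<and> walk_len xs < real m * dist p q"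
      if "p \<in> P" "q \<in> P" "p \<noteq> q" for p q
      using dilation_less_imp_short_walk[OF dil that] .
  qed (use P E balanced stars m \<sigma> in \<open>auto simp: geometric_graph_def\<close>)
  have "40 * CARD('d) * (2 * CARD('d) + 4) ^ CARD('d) * card (B i)
      \<le> 40 * CARD('d) * (2 * CARD('d) + 4) ^ CARD('d) * (k + 1)"
    using bags i by (intro mult_le_mono2) blast
  then show False using card_separator_large[OF m L P(2)] k by linarith
qed

lemma exists_side_length:
  fixes y :: real
  assumes D: "D \<ge> 2" and y: "y \<ge> 1"
  obtains L :: nat where "L \<ge> 1" "y \<le> real L ^ (D - 1)"
    "real L ^ D \<le> 2 ^ D * y powr (real D / (real D - 1))"
proof -
  have dr: "real D - 1 > 0" "real (D - 1) = real D - 1" using D by (auto simp: of_nat_diff)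
  define x where "x = y powr (1 / (real D - 1))"
  have x: "x \<ge> 1" unfolding x_def using y dr by (intro ge_one_powr_ge_zero) auto
  define L where "L = nat \<lceil>x\<rceil>"
  have "real L = of_int \<lceil>x\<rceil>" using x by (simp add: L_def)
  then have Lx: "x \<le> real L" "real L \<le> 2 * x"
    using x of_int_ceiling_le_add_one[of x] le_of_int_ceiling[of x] by linarith+
  have "x ^ (D - 1) = x powr real (D - 1)" using x by (simp add: powr_realpow)
  also have "\<dots> = y powr (1 / (real D - 1) * (real D - 1))" using dr by (simp add: x_def powr_powr)
  finally have "y = x ^ (D - 1)" using dr y by simp
  also have "\<dots> \<le> real L ^ (D - 1)" using Lx x by (intro power_mono) auto
  finally have lower: "y \<le> real L ^ (D - 1)" .
  have "real L ^ D \<le> (2 * x) ^ D" using Lx x by (intro power_mono) auto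
  also have "\<dots> = 2 ^ D * x powr real D" using x by (simp add: power_mult_distrib powr_realpow)
  also have "x powr real D = y powr (real D / (real D - 1))" by (simp add: x_def powr_powr)
  finally have upper: "real L ^ D \<le> 2 ^ D * y powr (real D / (real D - 1))" .
  have "L \<ge> 1" using Lx x by simp
  then show ?thesis using lower upper by (rule that)
qed

lemma grid_parameters:
  fixes D A k n :: nat and T :: real
  assumes D: "D \<ge> 2" and A: "A \<ge> 1" and k: "k \<ge> 1" and T: "T > 1"
    and n: "T * (20 * real D * 2 ^ D * (2 * real A) powr (real D / (real D - 1))
              * real k powr (real D / (real D - 1))) \<le> real n"
  obtains m L :: nat where "m \<ge> 10" "L \<ge> 1" "D * L ^ D * m \<le> n" "n \<le> D * L ^ D * (m + 1)"
    "T \<le> real m" "A * (k + 1) \<le> L ^ (D - 1)"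
proof -
  define e where "e = real D / (real D - 1)"
  define y where "y = 2 * real A * real k"
  have "1 * 1 \<le> real A * real k" using A k by (intro mult_mono) auto
  then obtain L where L: "L \<ge> 1" "y \<le> real L ^ (D - 1)" "real L ^ D \<le> 2 ^ D * y powr e"
    using exists_side_length[OF D, of y] by (auto simp: y_def e_def)
  have "real A * 1 \<le> real A * real k" using k by (intro mult_left_mono) auto
  then have "real (A * (k + 1)) \<le> real (L ^ (D - 1))" using L(2) by (simp add: y_def algebra_simps)
  then have Ak: "A * (k + 1) \<le> L ^ (D - 1)" by (simp only: of_nat_le_iff)
  define q where "q = D * L ^ D"
  have q: "q > 0" using D L by (simp add: q_def)
  have "y powr e = (2 * real A) powr e * real k powr e" by (simp add: y_def powr_mult)
  then have "20 * T * real q \<le> T * (20 * real D * 2 ^ D * (2 * real A) powr e * real k powr e)"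
    using T L(3) by (simp add: q_def mult_left_mono mult.assoc)
  also have "\<dots> \<le> real n" using n by (simp add: e_def)
  finally have Tq: "20 * T * real q \<le> real n" .
  define m where "m = n div q"
  have lo: "q * m \<le> n" by (simp add: m_def)
  have "n = q * m + n mod q" by (simp add: m_def)
  then have hi: "n < q * (m + 1)" using mod_less_divisor[OF q, of n] by (simp add: algebra_simps)
  then have "real n < real q * (real m + 1)" by (metis of_nat_1 of_nat_add of_nat_less_iff of_nat_mult)
  then have "20 * T * real q < (real m + 1) * real q" using Tq by (simp add: algebra_simps)
  then have "20 * T < real m + 1" using q by simp
  then show ?thesis using that[of m L] T L lo hi Ak by (simp add: q_def)
qed

definition grid_const :: "nat \<Rightarrow> real" where
  "grid_const D = 20 * real D * 2 ^ D * (80 * real D * (2 * real D + 4) ^ D) powr (real D / (real D - 1))"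

lemma grid_const_pos: "D \<ge> 1 \<Longrightarrow> grid_const D > 0"
  by (simp add: grid_const_def)

lemma exists_points_dilation_ge:
  assumes D: "CARD('d::finite) \<ge> 2" and k: "k \<ge> 1" and T: "T > 1"
    and n: "T * grid_const CARD('d) * real k powr (real CARD('d) / (real CARD('d) - 1)) \<le> real n"
  shows "\<exists>P :: (real^'d) set. finite P \<and> card P = n \<and>
           (\<forall>E. geometric_graph P E \<and> treewidth P E = k \<longrightarrow> dilation P E \<ge> ereal T)"
proof -
  define A where "A = 40 * CARD('d) * (2 * CARD('d) + 4) ^ CARD('d)"
  have "A \<ge> 1" using D by (simp add: A_def)
  moreover have "2 * real A = 80 * real CARD('d) * (2 * real CARD('d) + 4) ^ CARD('d)"
    by (simp add: A_def)
  ultimately obtain m L where mL: "m \<ge> 10" "L \<ge> 1" "CARD('d) * L ^ CARD('d) * m \<le> n"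
      "n \<le> CARD('d) * L ^ CARD('d) * (m + 1)" "T \<le> real m" "A * (k + 1) \<le> L ^ (CARD('d) - 1)"
    using grid_parameters[OF D _ k T, of A n] n by (auto simp: grid_const_def ac_simps)
  obtain P :: "(real^'d) set" where P: "finite P" "card P = n"
      "\<And>i g t. g \<in> grid L \<Longrightarrow> t < m \<Longrightarrow> spoke m i g t \<in> P"
    using exists_point_set_with_stars[of m L n] mL by auto
  have "dilation P E \<ge> ereal T" if E: "geometric_graph P E" "treewidth P E = k" for E
  proof -
    have "has_td_width P E k" using has_td_width_treewidth[of E P] E by (simp add: geometric_graph_def)
    then have "ereal m \<le> dilation P E"
      using dilation_ge_if_has_td_width[OF mL(1,2) P(1) _ P(3) _ E(1)] P(2) mL(4,6) by (simp add: A_def)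
    then show ?thesis using mL(5) by (meson ereal_less_eq(3) order_trans)
  qed
  then show ?thesis using P by blast
qed

theorem theorem2:
  assumes "CARD('d::finite) \<ge> 2"
  shows "\<exists>c>0. \<forall>n k :: nat. n \<ge> 1 \<and> k \<ge> 1 \<and>
           real k \<le> real n powr ((real CARD('d) - 1) / real CARD('d))
                      * (5 * real CARD('d)) powr (1 / real CARD('d) - 2) \<longrightarrow>
           (\<exists>P :: (real^'d) set. finite P \<and> card P = n \<and>
              (\<forall>E. geometric_graph P E \<and> treewidth P E = k \<longrightarrow>
                  dilation P E \<ge> ereal (c * real n / real k powr (real CARD('d) / (real CARD('d) - 1)))))"
proof -
  define D where "D = CARD('d)"
  define e where "e = real D / (real D - 1)"
  define c where "c = 1 / grid_const D"
  have D: "D \<ge> 2" using assms by (simp add: D_def)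
  have c: "c > 0" using D grid_const_pos[of D] by (simp add: c_def)
  have "\<exists>P :: (real^'d) set. finite P \<and> card P = n \<and>
      (\<forall>E. geometric_graph P E \<and> treewidth P E = k \<longrightarrow> dilation P E \<ge> ereal (c * real n / real k powr e))"
    if n: "n \<ge> 1" and k: "k \<ge> 1"
      and k_le: "real k \<le> real n powr ((real D - 1) / real D) * (5 * real D) powr (1 / real D - 2)" for n k
  proof (cases "c * real n / real k powr e \<le> 1")
    case True
    txt \<open>The bound is trivial here; the hypothesis on \<open>k\<close> only serves to exclude \<open>n = 1\<close>.\<close>
    have "(5 * real D) powr (1 / real D - 2) < 1" using D by (intro powr_less_one) (auto simp: field_simps)
    then have "n \<ge> 2" using n k k_le by (cases "n = 1") auto
    then obtain P :: "(real^'d) set" where "finite P" "card P = n" "\<forall>E. dilation P E \<ge> 1"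
      using exists_points_dilation_ge_one by blast
    moreover have "ereal (c * real n / real k powr e) \<le> 1" using True by simp
    ultimately show ?thesis by (blast intro: order_trans)
  next
    case False
    have "c * real n / real k powr e * grid_const D * real k powr e = real n"
      using c k by (simp add: c_def)
    with False show ?thesis
      using exists_points_dilation_ge[OF assms k, of "c * real n / real k powr e" n] by (simp add: D_def e_def)
  qed
  with c show ?thesis unfolding D_def e_def by blast
qed

end
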